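(* Assume $r(\boldsymbol\gamma)\le 1<2+\alpha\le R(\boldsymbol\gamma)$. Let $(\mathbf A^\ddagger,\mathbf q^\ddagger)$ maximize $\Pi$ over $\mathcal A\times\mathbb R^n_{\ge0}$, and let $(\mathbf A^{\rm d},\mathbf q^{\rm d})$ be an equilibrium with $\mathbf A^{\rm d}\mathbf q^{\rm d}=\boldsymbol\beta$ and $\mathbf q^{\rm d}=\boldsymbol\gamma/(2+\alpha)$. Then $\Omega(\mathbf A^{\rm d},\mathbf q^{\rm d})<\Omega(\mathbf A^\ddagger,\mathbf q^\ddagger)$ if and only if $\|\boldsymbol\gamma\|_2>\dfrac{2+\alpha}{\sqrt{4+3\alpha}}$.
   Context: Model: integers $n\ge2$, $m\ge2$; $\alpha>0$, $\boldsymbol\beta\in\mathbb R^m$ with $\|\boldsymbol\beta\|_2=1$, $\boldsymbol\gamma\in\mathbb R^n$ with all $\gamma_i>0$. $\mathcal A$ is the set of real $m\times n$ matrices $\mathbf A=[\mathbf a_1,\dots,\mathbf a_n]$ with all $\|\mathbf a_i\|_2=1$. With $\mathbf x=\mathbf A\mathbf q$: total surplus $\Omega(\mathbf A,\mathbf q)=\alpha(\mathbf x^\top\boldsymbol\beta-\tfrac12\mathbf x^\top\mathbf x)+\mathbf q^\top\boldsymbol\gamma-\tfrac12\mathbf q^\top\mathbf q$; aggregate profit $\Pi(\mathbf A,\mathbf q)=\alpha(\mathbf x^\top\boldsymbol\beta-\mathbf x^\top\mathbf x)+\mathbf q^\top\boldsymbol\gamma-\mathbf q^\top\mathbf q$.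 Oligopoly: firm $i$ chooses unit $\mathbf a_i$ and $q_i\ge0$ to maximize $\Pi_i=\alpha q_i\mathbf a_i^\top(\boldsymbol\beta-\sum_{j\ne i}q_j\mathbf a_j)-(1+\alpha)q_i^2+\gamma_iq_i$ given others; an equilibrium is a profile of mutual best responses. $R(\mathbf v)=\|\mathbf v\|_1$, $r(\mathbf v)=2\|\mathbf v\|_\infty-\|\mathbf v\|_1$. *)

theory Defs
  imports "HOL-Analysis.Analysis"
begin

text \<open>Matrices A are m x n, i.e. of type real^'n^'m; column i is the firm's unit a_i.\<close>

definition unit_cols :: "real^'n^'m \<Rightarrow> bool" where
  "unit_cols A \<longleftrightarrow> (\<forall>i. norm (column i A) = 1)"

definition nonneg_vec :: "real^'n \<Rightarrow> bool" where
  "nonneg_vec q \<longleftrightarrow> (\<forall>i. q $ i \<ge> 0)"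

definition surplus :: "real \<Rightarrow> real^'m \<Rightarrow> real^'n \<Rightarrow> real^'n^'m \<Rightarrow> real^'n \<Rightarrow> real" where
  "surplus \<alpha> \<beta> \<gamma> A q =
     (let x = A *v q in \<alpha> * (x \<bullet> \<beta> - (1/2) * (x \<bullet> x)) + q \<bullet> \<gamma> - (1/2) * (q \<bullet> q))"

definition agg_profit :: "real \<Rightarrow> real^'m \<Rightarrow> real^'n \<Rightarrow> real^'n^'m \<Rightarrow> real^'n \<Rightarrow> real" where
  "agg_profit \<alpha> \<beta> \<gamma> A q =
     (let x = A *v q in \<alpha> * (x \<bullet> \<beta> - x \<bullet> x) + q \<bullet> \<gamma> - q \<bullet> q)"

definition firm_profit :: "real \<Rightarrow> real^'m \<Rightarrow> real^'n \<Rightarrow> real^'n^'m \<Rightarrow> real^'n \<Rightarrow> 'n \<Rightarrow> real^'m \<Rightarrow> real \<Rightarrow> real" where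
  "firm_profit \<alpha> \<beta> \<gamma> A q i a qi =
     \<alpha> * qi * (a \<bullet> (\<beta> - (\<Sum>j\<in>UNIV - {i}. q $ j *\<^sub>R column j A)))
     - (1 + \<alpha>) * qi\<^sup>2 + \<gamma> $ i * qi"

definition is_equilibrium :: "real \<Rightarrow> real^'m \<Rightarrow> real^'n \<Rightarrow> real^'n^'m \<Rightarrow> real^'n \<Rightarrow> bool" where
  "is_equilibrium \<alpha> \<beta> \<gamma> A q \<longleftrightarrow> unit_cols A \<and> nonneg_vec q \<and>
     (\<forall>i a qi. norm a = 1 \<and> qi \<ge> 0 \<longrightarrow>
        firm_profit \<alpha> \<beta> \<gamma> A q i a qi \<le> firm_profit \<alpha> \<beta> \<gamma> A q i (column i A) (q $ i))"

definition norm1 :: "real^'n \<Rightarrow> real" where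
  "norm1 v = (\<Sum>i\<in>UNIV. \<bar>v $ i\<bar>)"

definition norm_inf :: "real^'n \<Rightarrow> real" where
  "norm_inf v = Max (range (\<lambda>i. \<bar>v $ i\<bar>))"

definition R_fun :: "real^'n \<Rightarrow> real" where "R_fun v = norm1 v"
definition r_fun :: "real^'n \<Rightarrow> real" where "r_fun v = 2 * norm_inf v - norm1 v"

end

theory Submission
  imports Defs
begin

text \<open>
  Completing squares, \<open>\<Pi> = (\<alpha> + |\<gamma>|\<^sup>2)/4 - \<alpha> |A q - \<beta>/2|\<^sup>2 - |q - \<gamma>/2|\<^sup>2\<close>, so the
  joint profit maximum is attained exactly at \<open>A q = \<beta>/2\<close>, \<open>q = \<gamma>/2\<close>, provided some unit
  columns satisfy \<open>\<Sum>\<^sub>j \<gamma>\<^sub>j a\<^sub>j = \<beta>\<close>. Such columns exist because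
  \<open>r(\<gamma>) \<le> 1 \<le> R(\<gamma>)\<close> is the condition for a closed planar polygon with side lengths
  \<open>\<gamma>\<^sub>j\<close> and \<open>1\<close>; it is built in the complex plane and embedded into the plane spanned
  by \<open>\<beta>\<close> and a unit vector orthogonal to it. The surplus is then \<open>3\<alpha>/8 + 3|\<gamma>|\<^sup>2/8\<close> at the
  maximum, and comparing it with the surplus at the equilibrium reduces to
  \<open>(2 + \<alpha>)\<^sup>2 < (4 + 3\<alpha>) |\<gamma>|\<^sup>2\<close>.
\<close>

lemma exists_unit_norm_add_eq:
  fixes V :: complex and b L :: real
  assumes "0 \<le> b" "\<bar>cmod V - b\<bar> \<le> L" "L \<le> cmod V + b"
  shows "\<exists>u. cmod u = 1 \<and> cmod (V + of_real b * u) = L"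
proof -
  define d where "d = (if V = 0 then 1 else sgn V)"
  have d: "cmod d = 1" "V = of_real (cmod V) * d"
    by (simp_all add: d_def norm_mult norm_inverse complex_sgn_def scaleR_conv_of_real)
  define f where "f t = cmod (V + of_real b * (d * cis t))" for t
  have f_eq: "f t = cmod (of_real (cmod V) + of_real b * cis t)" for t
  proof -
    have "V + of_real b * (d * cis t) = d * (of_real (cmod V) + of_real b * cis t)"
      by (subst d(2)) (simp add: algebra_simps)
    then show ?thesis unfolding f_def by (simp add: norm_mult d(1))
  qed
  have "f pi \<le> L" "L \<le> f 0"
    using assms by (simp_all add: f_eq flip: of_real_add of_real_diff)
  moreover have "isCont f t" for t
    unfolding f_def cis_conv_exp by (intro continuous_intros)
  ultimately obtain t where "f t = L"
    using IVT2[of f pi L 0] by auto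
  moreover have "cmod (d * cis t) = 1" by (simp add: norm_mult d(1))
  ultimately show ?thesis unfolding f_def by blast
qed

lemma exists_unit_weighted_sum_norm_eq:
  fixes w :: "'a \<Rightarrow> real"
  assumes "finite S" "S \<noteq> {}" "\<forall>i\<in>S. 0 \<le> w i"
    and "2 * Max (w ` S) - sum w S \<le> L" "0 \<le> L" "L \<le> sum w S"
  shows "\<exists>z. (\<forall>i\<in>S. cmod (z i) = 1) \<and> cmod (\<Sum>i\<in>S. of_real (w i) * z i) = L"
  using assms
proof (induction S arbitrary: L rule: finite_ne_induct)
  case (singleton a)
  then show ?case by (intro exI[of _ "\<lambda>_. 1"]) auto
next
  case (insert a S)
  define M where "M = Max (w ` S)"
  define R where "R = sum w S"
  have "M \<in> w ` S" unfolding M_def using insert.hyps by simp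
  then have M: "0 \<le> M" "M \<le> R"
    unfolding R_def using insert.hyps insert.prems(1) by (auto intro: member_le_sum)
  have L: "w a - R \<le> L" "2 * M - w a - R \<le> L" "0 \<le> L" "L \<le> w a + R" "0 \<le> w a"
    using insert by (simp_all add: M_def R_def max_def split: if_splits)
  \<comment> \<open>the sides in \<open>S\<close> are closed up to length \<open>L0\<close>, which must be admissible for \<open>S\<close>
    and form a triangle with \<open>w a\<close> and \<open>L\<close>\<close>
  define L0 where "L0 = max (max 0 (2 * M - R)) \<bar>L - w a\<bar>"
  have L0: "2 * M - R \<le> L0" "0 \<le> L0" "L0 \<le> R" "\<bar>L0 - w a\<bar> \<le> L" "L \<le> L0 + w a"
    unfolding L0_def using L M by (simp_all add: abs_if max_def)
  obtain z where z: "\<forall>i\<in>S. cmod (z i) = 1" "cmod (\<Sum>i\<in>S. of_real (w i) * z i) = L0"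
    using insert.IH[of L0] insert.prems(1) L0(1-3) unfolding M_def R_def by auto
  obtain u where u: "cmod u = 1" "cmod ((\<Sum>i\<in>S. of_real (w i) * z i) + of_real (w a) * u) = L"
    using exists_unit_norm_add_eq[OF L(5), of "\<Sum>i\<in>S. of_real (w i) * z i" L] L0(4,5)
    unfolding z(2) by blast
  have "(\<Sum>i\<in>S. of_real (w i) * (z(a := u)) i) = (\<Sum>i\<in>S. of_real (w i) * z i)"
    using insert.hyps by (intro sum.cong) auto
  then have "(\<Sum>i\<in>insert a S. of_real (w i) * (z(a := u)) i) =
        (\<Sum>i\<in>S. of_real (w i) * z i) + of_real (w a) * u"
    using insert.hyps by (simp add: add.commute)
  then show ?case using z(1) u by (intro exI[of _ "z(a := u)"]) auto
qed

lemma exists_unit_weighted_sum_eq: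
  fixes w :: "'a \<Rightarrow> real"
  assumes "finite S" "S \<noteq> {}" "\<forall>i\<in>S. 0 \<le> w i"
    and "2 * Max (w ` S) - sum w S \<le> L" "0 \<le> L" "L \<le> sum w S"
  shows "\<exists>z. (\<forall>i\<in>S. cmod (z i) = 1) \<and> (\<Sum>i\<in>S. of_real (w i) * z i) = of_real L"
proof -
  obtain z where z: "\<forall>i\<in>S. cmod (z i) = 1" "cmod (\<Sum>i\<in>S. of_real (w i) * z i) = L"
    using exists_unit_weighted_sum_norm_eq[OF assms] by blast
  define V where "V = (\<Sum>i\<in>S. of_real (w i) * z i)"
  define \<rho> where "\<rho> = (if V = 0 then 1 else of_real L / V)"
  have \<rho>: "cmod \<rho> = 1" "\<rho> * V = of_real L"
    using z(2) by (auto simp: \<rho>_def V_def norm_divide)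
  have "(\<Sum>i\<in>S. of_real (w i) * (\<rho> * z i)) = \<rho> * V"
    unfolding V_def sum_distrib_left by (simp add: algebra_simps)
  then show ?thesis
    using z(1) \<rho> by (intro exI[of _ "\<lambda>i. \<rho> * z i"]) (auto simp: norm_mult)
qed

lemma exists_unit_orthogonal:
  fixes b :: "'a::euclidean_space"
  assumes "2 \<le> DIM('a)"
  obtains e where "norm e = 1" "b \<bullet> e = 0"
proof -
  have "dim {b} < DIM('a)" using assms by (simp add: dim_singleton)
  then obtain x where x: "x \<noteq> 0" "\<And>y. y \<in> span {b} \<Longrightarrow> orthogonal x y"
    using orthogonal_to_subspace_exists by blast
  have "b \<bullet> x = 0" using x(2)[OF span_base] by (simp add: orthogonal_def inner_commute)
  then show ?thesis using that[of "sgn x"] x(1) by (simp add: norm_sgn sgn_div_norm)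
qed

lemma exists_unit_direction:
  fixes y :: "'a::euclidean_space"
  obtains b where "norm b = 1" "y = norm y *\<^sub>R b"
proof (cases "y = 0")
  case True
  obtain b :: 'a where "b \<in> Basis" using nonempty_Basis by blast
  then show ?thesis using that[of b] True by simp
next
  case False
  then show ?thesis using that[of "sgn y"] by (simp add: norm_sgn sgn_div_norm)
qed

lemma exists_unit_cols_mult_eq:
  fixes \<gamma> :: "real^'n" and y :: "real^'m"
  assumes "2 \<le> CARD('m)" "\<forall>i. 0 \<le> \<gamma> $ i" "r_fun \<gamma> \<le> norm y" "norm y \<le> R_fun \<gamma>"
  shows "\<exists>A. unit_cols A \<and> A *v \<gamma> = y"
proof -
  obtain b :: "real^'m" where b: "norm b = 1" "y = norm y *\<^sub>R b"
    using exists_unit_direction by blast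
  obtain e :: "real^'m" where e: "norm e = 1" "b \<bullet> e = 0"
    using exists_unit_orthogonal[of b] assms(1) by auto
  have "norm1 \<gamma> = sum (($) \<gamma>) UNIV" "norm_inf \<gamma> = Max (range (($) \<gamma>))"
    using assms(2) by (simp_all add: norm1_def norm_inf_def)
  then obtain z where z: "\<forall>j. cmod (z j) = 1"
      "(\<Sum>j\<in>UNIV. of_real (\<gamma> $ j) * z j) = of_real (norm y)"
    using exists_unit_weighted_sum_eq[of UNIV "($) \<gamma>" "norm y"] assms(2-4)
    unfolding r_fun_def R_fun_def by auto
  define A :: "real^'n^'m" where "A = (\<chi> k j. Re (z j) * b $ k + Im (z j) * e $ k)"
  have col: "column j A = Re (z j) *\<^sub>R b + Im (z j) *\<^sub>R e" for j
    unfolding A_def column_def by (simp add: vec_eq_iff)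
  have "column j A \<bullet> column j A = (Re (z j))\<^sup>2 + (Im (z j))\<^sup>2" for j
    using b(1) e by (simp add: col inner_add_left inner_add_right inner_commute
        power2_eq_square norm_eq_1)
  then have "unit_cols A"
    using z(1) unfolding unit_cols_def by (metis cmod_power2 norm_eq_1 one_power2)
  moreover have "A *v \<gamma> = (\<Sum>j\<in>UNIV. \<gamma> $ j * Re (z j)) *\<^sub>R b + (\<Sum>j\<in>UNIV. \<gamma> $ j * Im (z j)) *\<^sub>R e"
    by (simp add: matrix_mult_sum col scalar_mult_eq_scaleR scaleR_add_right sum.distrib
        scaleR_sum_left)
  moreover have "(\<Sum>j\<in>UNIV. \<gamma> $ j * Re (z j)) = norm y" "(\<Sum>j\<in>UNIV. \<gamma> $ j * Im (z j)) = 0"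
    using arg_cong[OF z(2), of Re] arg_cong[OF z(2), of Im] by (simp_all add: Re_sum Im_sum)
  ultimately show ?thesis using b(2) by auto
qed

lemma agg_profit_completed_square:
  "agg_profit \<alpha> \<beta> \<gamma> A q = (\<alpha> * (\<beta> \<bullet> \<beta>) + \<gamma> \<bullet> \<gamma>) / 4
     - \<alpha> * (norm (A *v q - (1/2) *\<^sub>R \<beta>))\<^sup>2 - (norm (q - (1/2) *\<^sub>R \<gamma>))\<^sup>2"
  unfolding agg_profit_def Let_def power2_norm_eq_inner
  by (simp add: inner_diff_left inner_diff_right inner_commute algebra_simps)

lemma agg_profit_maximizer:
  assumes "0 < \<alpha>" "\<forall>i. 0 \<le> \<gamma> $ i" "unit_cols A0" "A0 *v \<gamma> = \<beta>"
    and maximal: "\<forall>A q. unit_cols A \<and> nonneg_vec q \<longrightarrow> agg_profit \<alpha> \<beta> \<gamma> A q \<le> agg_profit \<alpha> \<beta> \<gamma> Am qm"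
  shows "Am *v qm = (1/2) *\<^sub>R \<beta>" "qm = (1/2) *\<^sub>R \<gamma>"
proof -
  define Pi_max where "Pi_max = (\<alpha> * (\<beta> \<bullet> \<beta>) + \<gamma> \<bullet> \<gamma>) / 4"
  have "nonneg_vec ((1/2) *\<^sub>R \<gamma>)" using assms(2) by (simp add: nonneg_vec_def)
  moreover have "agg_profit \<alpha> \<beta> \<gamma> A0 ((1/2) *\<^sub>R \<gamma>) = Pi_max"
    using assms(4) by (simp add: agg_profit_completed_square Pi_max_def matrix_vector_mult_scaleR)
  ultimately have "Pi_max \<le> agg_profit \<alpha> \<beta> \<gamma> Am qm" using maximal assms(3) by metis
  then have "\<alpha> * (norm (Am *v qm - (1/2) *\<^sub>R \<beta>))\<^sup>2 + (norm (qm - (1/2) *\<^sub>R \<gamma>))\<^sup>2 \<le> 0"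
    unfolding agg_profit_completed_square Pi_max_def by linarith
  moreover have "0 \<le> \<alpha> * (norm (Am *v qm - (1/2) *\<^sub>R \<beta>))\<^sup>2" using assms(1) by simp
  ultimately have "\<alpha> * (norm (Am *v qm - (1/2) *\<^sub>R \<beta>))\<^sup>2 = 0" "(norm (qm - (1/2) *\<^sub>R \<gamma>))\<^sup>2 = 0"
    using zero_le_power2[of "norm (qm - (1/2) *\<^sub>R \<gamma>)"] by linarith+
  then show "Am *v qm = (1/2) *\<^sub>R \<beta>" "qm = (1/2) *\<^sub>R \<gamma>" using assms(1) by simp_all
qed

lemma surplus_scaled:
  assumes "A *v q = c *\<^sub>R \<beta>" "q = d *\<^sub>R \<gamma>"
  shows "surplus \<alpha> \<beta> \<gamma> A q = \<alpha> * (c - c\<^sup>2 / 2) * (norm \<beta>)\<^sup>2 + (d - d\<^sup>2 / 2) * (norm \<gamma>)\<^sup>2"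
  unfolding surplus_def Let_def assms(1) power2_norm_eq_inner
  by (simp add: assms(2) power2_eq_square algebra_simps)

lemma surplus_gap_iff:
  fixes \<alpha> n :: real
  assumes "0 < \<alpha>" "0 \<le> n"
  shows "\<alpha> / 2 + (1 / (2 + \<alpha>) - (1 / (2 + \<alpha>))\<^sup>2 / 2) * n\<^sup>2 < 3/8 * \<alpha> + 3/8 * n\<^sup>2
    \<longleftrightarrow> (2 + \<alpha>) / sqrt (4 + 3 * \<alpha>) < n"
proof -
  define s k where "s = 2 + \<alpha>" and "k = 4 + 3 * \<alpha>"
  have sk: "0 < s" "0 < k" using assms(1) by (simp_all add: s_def k_def)
  have \<alpha>k: "\<alpha> = s - 2" "k = 3 * s - 2" by (simp_all add: s_def k_def)
  have gap: "3/8 * \<alpha> + 3/8 * n\<^sup>2 - (\<alpha> / 2 + (1 / s - (1 / s)\<^sup>2 / 2) * n\<^sup>2)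
      = \<alpha> / (8 * s\<^sup>2) * (k * n\<^sup>2 - s\<^sup>2)"
    using sk(1) unfolding \<alpha>k by (simp add: field_simps power2_eq_square)
  have "0 < \<alpha> / (8 * s\<^sup>2)" using sk assms(1) by simp
  then have "\<alpha> / 2 + (1 / s - (1 / s)\<^sup>2 / 2) * n\<^sup>2 < 3/8 * \<alpha> + 3/8 * n\<^sup>2 \<longleftrightarrow> 0 < k * n\<^sup>2 - s\<^sup>2"
    by (metis gap diff_gt_0_iff_gt zero_less_mult_iff less_asym)
  also have "\<dots> \<longleftrightarrow> sqrt (s\<^sup>2) < sqrt (k * n\<^sup>2)"
    by (subst real_sqrt_less_iff) simp
  also have "\<dots> \<longleftrightarrow> s < n * sqrt k"
    using sk(1) assms(2) by (simp add: real_sqrt_mult mult.commute[of "sqrt k"])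
  also have "\<dots> \<longleftrightarrow> s / sqrt k < n"
    using sk(2) by (simp add: pos_divide_less_eq)
  finally show ?thesis unfolding s_def k_def .
qed

theorem theorem2:
  fixes \<alpha> :: real and \<beta> :: "real^'m" and \<gamma> :: "real^'n"
    and Ad :: "real^'n^'m" and qd :: "real^'n" and Am :: "real^'n^'m" and qm :: "real^'n"
  assumes "CARD('n) \<ge> 2" and "CARD('m) \<ge> 2"
    and "\<alpha> > 0" and "norm \<beta> = 1" and "\<forall>i. \<gamma> $ i > 0"
    and "r_fun \<gamma> \<le> 1" and "1 < 2 + \<alpha>" and "2 + \<alpha> \<le> R_fun \<gamma>"
    and "unit_cols Am" and "nonneg_vec qm"
    and "\<forall>A q. unit_cols A \<and> nonneg_vec q \<longrightarrow> agg_profit \<alpha> \<beta> \<gamma> A q \<le> agg_profit \<alpha> \<beta> \<gamma> Am qm"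
    and "is_equilibrium \<alpha> \<beta> \<gamma> Ad qd"
    and "Ad *v qd = \<beta>" and "qd = (1 / (2 + \<alpha>)) *\<^sub>R \<gamma>"
  shows "surplus \<alpha> \<beta> \<gamma> Ad qd < surplus \<alpha> \<beta> \<gamma> Am qm \<longleftrightarrow>
         norm \<gamma> > (2 + \<alpha>) / sqrt (4 + 3 * \<alpha>)"
proof -
  \<comment> \<open>of the equilibrium only the given values of \<open>Ad *v qd\<close> and \<open>qd\<close> are needed\<close>
  have \<gamma>_nonneg: "\<forall>i. 0 \<le> \<gamma> $ i" using assms(5) by (simp add: less_imp_le)
  have "r_fun \<gamma> \<le> norm \<beta>" "norm \<beta> \<le> R_fun \<gamma>" using assms(3,4,6,8) by linarith+
  then obtain A0 where "unit_cols A0" "A0 *v \<gamma> = \<beta>"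
    using exists_unit_cols_mult_eq[OF assms(2) \<gamma>_nonneg] by blast
  then have "Am *v qm = (1/2) *\<^sub>R \<beta>" "qm = (1/2) *\<^sub>R \<gamma>"
    using agg_profit_maximizer[OF assms(3) \<gamma>_nonneg _ _ assms(11)] by simp_all
  from surplus_scaled[OF this] have Sm: "surplus \<alpha> \<beta> \<gamma> Am qm = 3/8 * \<alpha> + 3/8 * (norm \<gamma>)\<^sup>2"
    using assms(4) by (simp add: power_divide)
  have "Ad *v qd = 1 *\<^sub>R \<beta>" using assms(13) by simp
  then have "surplus \<alpha> \<beta> \<gamma> Ad qd = \<alpha> * (1 - 1\<^sup>2 / 2) * (norm \<beta>)\<^sup>2
      + (1 / (2 + \<alpha>) - (1 / (2 + \<alpha>))\<^sup>2 / 2) * (norm \<gamma>)\<^sup>2"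
    by (rule surplus_scaled[OF _ assms(14)])
  also have "\<alpha> * (1 - 1\<^sup>2 / 2) * (norm \<beta>)\<^sup>2 = \<alpha> / 2" using assms(4) by simp
  finally have Sd: "surplus \<alpha> \<beta> \<gamma> Ad qd = \<alpha> / 2 + (1 / (2 + \<alpha>) - (1 / (2 + \<alpha>))\<^sup>2 / 2) * (norm \<gamma>)\<^sup>2" .
  show ?thesis unfolding Sm Sd by (rule surplus_gap_iff[OF assms(3) norm_ge_zero])
qed

end
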